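(* Let $r\ge2$ and let $F$ be an $r$-critical graph with $f$ vertices. For every $\epsilon>0$ there exists $\delta>0$ such that the following holds: if $n=\sum_{i=1}^r n_i>1/\delta$ and, for all $i\in[r]$, we have $0\le d_i\le n_i$, $|n_i-n/r|\le\delta n$ and $|\xi_i-d_i/n|\le\delta$, then, with $\boldsymbol{d}=(d_1,\dots,d_r)$ and $\boldsymbol{\xi}=(\xi_1,\dots,\xi_r)$, \[|F(n_1,\dots,n_r;\boldsymbol{d})-n^{f-1}P_F(\boldsymbol{\xi})|<\epsilon n^{f-1}.\]
   Context: A graph $F$ is $r$-critical if $\chi(F)=r+1$ and $F$ contains an edge $e$ with $\chi(F-e)=r$. A vertex $u$ of $F$ is critical if $\chi(F-u)=r$. $F(n_1,\dots,n_r;\boldsymbol{d})$ denotes the number of subgraphs isomorphic to $F$ in the graph $K(V_1,\dots,V_r)+z$, where $K(V_1,\dots,V_r)$ is the complete $r$-partite graph on disjoint parts with $|V_i|=n_i$, and $z$ is an extra vertex having exactly $d_i$ neighbors in $V_i$ for each $i$. Let $\mathrm{Aut}(F)$ denote the number of automorphisms of $F$. For $\boldsymbol{\xi}\in\mathbb{R}^r$, \[P_F(\boldsymbol{\xi})=\frac{1}{\mathrm{Aut}(F)}\sum_{u\text{ critical}}\ \sum_{\chi_u}\ \prod_{i=1}^r \frac{1}{r^{x_i}}\xi_i^{y_i},\] where the inner sum is over all proper colorings $\chi_u:V(F)\setminus\{u\}\to[r]$ of $F-u$, $y_i$ is the number of neighbors of $u$ receiving color $i$, and $x_i$ is the number of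 non-neighbors of $u$ (other than $u$) receiving color $i$. *)

theory Defs
  imports "HOL-Library.FuncSet" Complex_Main
begin

definition graph :: "'a set \<Rightarrow> 'a set set \<Rightarrow> bool" where
  "graph V E \<longleftrightarrow> finite V \<and> (\<forall>e\<in>E. \<exists>u v. e = {u, v} \<and> u \<noteq> v \<and> u \<in> V \<and> v \<in> V)"

definition proper_coloring :: "'a set \<Rightarrow> 'a set set \<Rightarrow> nat \<Rightarrow> ('a \<Rightarrow> nat) \<Rightarrow> bool" where
  "proper_coloring V E k c \<longleftrightarrow> (\<forall>v\<in>V. c v < k) \<and> (\<forall>u\<in>V. \<forall>v\<in>V. {u, v} \<in> E \<longrightarrow> c u \<noteq> c v)"

definition chromatic_number :: "'a set \<Rightarrow> 'a set set \<Rightarrow> nat" where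
  "chromatic_number V E = (LEAST k. \<exists>c. proper_coloring V E k c)"

definition del_vertex_edges :: "'a set set \<Rightarrow> 'a \<Rightarrow> 'a set set" where
  "del_vertex_edges E u = {e \<in> E. u \<notin> e}"

definition r_critical :: "nat \<Rightarrow> 'a set \<Rightarrow> 'a set set \<Rightarrow> bool" where
  "r_critical r V E \<longleftrightarrow> chromatic_number V E = r + 1 \<and>
     (\<exists>e\<in>E. chromatic_number V (E - {e}) = r)"

definition critical_vertex :: "nat \<Rightarrow> 'a set \<Rightarrow> 'a set set \<Rightarrow> 'a \<Rightarrow> bool" where
  "critical_vertex r V E u \<longleftrightarrow> u \<in> V \<and> chromatic_number (V - {u}) (del_vertex_edges E u) = r"

definition num_aut :: "'a set \<Rightarrow> 'a set set \<Rightarrow> nat" where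
  "num_aut V E = card {\<sigma> \<in> V \<rightarrow>\<^sub>E V. bij_betw \<sigma> V V \<and>
       (\<forall>u\<in>V. \<forall>v\<in>V. {u, v} \<in> E \<longleftrightarrow> {\<sigma> u, \<sigma> v} \<in> E)}"

definition isomorphic :: "'a set \<Rightarrow> 'a set set \<Rightarrow> 'b set \<Rightarrow> 'b set set \<Rightarrow> bool" where
  "isomorphic V E W D \<longleftrightarrow> (\<exists>\<phi>. bij_betw \<phi> V W \<and>
       (\<forall>u\<in>V. \<forall>v\<in>V. {u, v} \<in> E \<longleftrightarrow> {\<phi> u, \<phi> v} \<in> D))"

definition subgraph_count :: "'a set \<Rightarrow> 'a set set \<Rightarrow> 'b set \<Rightarrow> 'b set set \<Rightarrow> nat" where
  "subgraph_count V E VH EH = card {(W, D). W \<subseteq> VH \<and> D \<subseteq> EH \<and> (\<forall>e\<in>D. e \<subseteq> W) \<and> isomorphic V E W D}"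

text \<open>Host graph K(V_1,...,V_r)+z: part V_i = {Some (i,j) | j < n_i} (i < r), z = None,
  z adjacent to the d_i vertices Some (i,j), j < d_i, of V_i.\<close>
definition host_V :: "nat \<Rightarrow> (nat \<Rightarrow> nat) \<Rightarrow> (nat \<times> nat) option set" where
  "host_V r ns = insert None {Some (i, j) | i j. i < r \<and> j < ns i}"

definition host_E :: "nat \<Rightarrow> (nat \<Rightarrow> nat) \<Rightarrow> (nat \<Rightarrow> nat) \<Rightarrow> (nat \<times> nat) option set set" where
  "host_E r ns ds =
     {{Some (i, j), Some (i', j')} | i j i' j'. i < r \<and> j < ns i \<and> i' < r \<and> j' < ns i' \<and> i \<noteq> i'}
   \<union> {{None, Some (i, j)} | i j. i < r \<and> j < ds i}"

definition F_count :: "'a set \<Rightarrow> 'a set set \<Rightarrow> nat \<Rightarrow> (nat \<Rightarrow> nat) \<Rightarrow> (nat \<Rightarrow> nat) \<Rightarrow> nat" where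
  "F_count V E r ns ds = subgraph_count V E (host_V r ns) (host_E r ns ds)"

definition P_F :: "'a set \<Rightarrow> 'a set set \<Rightarrow> nat \<Rightarrow> (nat \<Rightarrow> real) \<Rightarrow> real" where
  "P_F V E r \<xi> = (1 / real (num_aut V E)) *
     (\<Sum>u\<in>{u\<in>V. critical_vertex r V E u}.
        \<Sum>c\<in>{c \<in> (V - {u}) \<rightarrow>\<^sub>E {..<r}. proper_coloring (V - {u}) (del_vertex_edges E u) r c}.
          \<Prod>i<r. (1 / real r ^ card {v \<in> V - {u}. {u, v} \<notin> E \<and> c v = i}) *
                   \<xi> i ^ card {v \<in> V - {u}. {u, v} \<in> E \<and> c v = i})"

end

(*
  Count embeddings instead of copies: F(n_1,...,n_r; d) * Aut(F) is the number of injective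
  edge-preserving maps from F into K(V_1,...,V_r) + z. As chi(F) = r + 1, such a map sends some
  vertex u to z, and the parts containing the images of the other vertices form a proper
  r-colouring c of F - u, so u is critical. For fixed (u, c) the embeddings are exactly the
  injective choices, for every v other than u, of a vertex of part c(v): one of the d_c(v)
  neighbours of z if v is adjacent to u, any of the n_c(v) vertices otherwise. If l_v denotes the
  number of admissible vertices, the number of injective choices lies between prod (l_v - f) and
  prod l_v, and l_v / n is within delta of xi_c(v) resp. 1/r. Hence the count for (u, c) is
  n^(f-1) times the product of these weights up to O(delta n^(f-1)), and summing over (u, c) and
  dividing by Aut(F) gives n^(f-1) P_F(xi).
*)

theory Submission
  imports Defs
begin

section \<open>Colourings and critical vertices\<close>

lemma graph_no_loop: "graph V E \<Longrightarrow> {u} \<notin> E"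
  unfolding graph_def by (auto simp: doubleton_eq_iff)

lemma graph_edgeE:
  assumes "graph V E" "e \<in> E"
  obtains a b where "e = {a, b}" "a \<in> V" "b \<in> V"
proof -
  have "\<exists>a b. e = {a, b} \<and> a \<noteq> b \<and> a \<in> V \<and> b \<in> V"
    using assms unfolding graph_def by simp
  then show thesis using that by (elim exE conjE) simp
qed

lemma graph_edge_subset:
  assumes "graph V E" "e \<in> E"
  shows "e \<subseteq> V"
proof -
  obtain a b where "e = {a, b}" "a \<in> V" "b \<in> V" by (rule graph_edgeE[OF assms])
  then show ?thesis by simp
qed

lemma chromatic_number_le: "proper_coloring V E k c \<Longrightarrow> chromatic_number V E \<le> k"
  unfolding chromatic_number_def by (rule Least_le) blast

lemma chromatic_number_attained:
  assumes "finite V" "\<forall>u. {u} \<notin> E"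
  shows "\<exists>c. proper_coloring V E (chromatic_number V E) c"
proof -
  obtain g and m :: nat where g: "g ` V = {..<m}" "inj_on g V"
    using finite_imp_inj_to_nat_seg[OF assms(1)] by (auto simp: lessThan_def)
  have "proper_coloring V E m g"
    unfolding proper_coloring_def using g assms(2) by (auto simp: inj_on_def)
  then have "\<exists>k c. proper_coloring V E k c" by blast
  then show ?thesis
    unfolding chromatic_number_def by (rule LeastI_ex)
qed

lemma proper_coloring_extend:
  assumes "proper_coloring (V - {u}) (del_vertex_edges E u) k c" "\<forall>x. {x} \<notin> E"
  shows "proper_coloring V E (Suc k) (c(u := k))"
  unfolding proper_coloring_def
proof (intro conjI ballI impI)
  fix v assume "v \<in> V"
  then show "(c(u := k)) v < Suc k"
    using assms(1) unfolding proper_coloring_def by (cases "v = u") (auto simp: less_Suc_eq)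
next
  fix a b assume ab: "a \<in> V" "b \<in> V" "{a, b} \<in> E"
  have "a \<noteq> b" using ab assms(2) by auto
  have bound: "c v < k" if "v \<in> V - {u}" for v
    using assms(1) that unfolding proper_coloring_def by blast
  show "(c(u := k)) a \<noteq> (c(u := k)) b"
  proof (cases "a = u \<or> b = u")
    case True
    then show ?thesis using bound ab \<open>a \<noteq> b\<close> by (metis Diff_iff fun_upd_apply less_irrefl singletonD)
  next
    case False
    then have "{a, b} \<in> del_vertex_edges E u" using ab by (auto simp: del_vertex_edges_def)
    then show ?thesis using assms(1) ab False unfolding proper_coloring_def by auto
  qed
qed

lemma critical_vertexI:
  assumes "graph V E" "chromatic_number V E = r + 1" "u \<in> V"
    and c: "proper_coloring (V - {u}) (del_vertex_edges E u) r c"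
  shows "critical_vertex r V E u"
proof -
  let ?k = "chromatic_number (V - {u}) (del_vertex_edges E u)"
  have no_loop: "\<forall>x. {x} \<notin> E" using graph_no_loop[OF assms(1)] by blast
  then have "\<forall>x. {x} \<notin> del_vertex_edges E u" by (simp add: del_vertex_edges_def)
  moreover have "finite (V - {u})" using assms(1) by (simp add: graph_def)
  ultimately obtain c' where "proper_coloring (V - {u}) (del_vertex_edges E u) ?k c'"
    using chromatic_number_attained by blast
  then have "chromatic_number V E \<le> Suc ?k"
    by (rule chromatic_number_le[OF proper_coloring_extend[OF _ no_loop]])
  moreover have "?k \<le> r" using chromatic_number_le[OF c] .
  ultimately show ?thesis unfolding critical_vertex_def using assms(2,3) by simp
qed

section \<open>Embeddings and copies\<close>

definition embeddings :: "'a set \<Rightarrow> 'a set set \<Rightarrow> 'b set \<Rightarrow> 'b set set \<Rightarrow> ('a \<Rightarrow> 'b) set" where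
  "embeddings V E HV HE =
     {\<phi> \<in> V \<rightarrow>\<^sub>E HV. inj_on \<phi> V \<and> (\<forall>a\<in>V. \<forall>b\<in>V. {a, b} \<in> E \<longrightarrow> {\<phi> a, \<phi> b} \<in> HE)}"

definition automorphisms :: "'a set \<Rightarrow> 'a set set \<Rightarrow> ('a \<Rightarrow> 'a) set" where
  "automorphisms V E = {\<sigma> \<in> V \<rightarrow>\<^sub>E V. bij_betw \<sigma> V V \<and>
       (\<forall>u\<in>V. \<forall>v\<in>V. {u, v} \<in> E \<longleftrightarrow> {\<sigma> u, \<sigma> v} \<in> E)}"

definition image_graph :: "'a set \<Rightarrow> 'a set set \<Rightarrow> ('a \<Rightarrow> 'b) \<Rightarrow> 'b set \<times> 'b set set" where
  "image_graph V E \<phi> = (\<phi> ` V, (`) \<phi> ` E)"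

lemma automorphismsD:
  assumes "\<sigma> \<in> automorphisms V E"
  shows "\<sigma> \<in> V \<rightarrow>\<^sub>E V" "bij_betw \<sigma> V V"
    and "u \<in> V \<Longrightarrow> v \<in> V \<Longrightarrow> {u, v} \<in> E \<longleftrightarrow> {\<sigma> u, \<sigma> v} \<in> E"
  using assms unfolding automorphisms_def by blast+

lemma num_aut_eq_card_automorphisms: "num_aut V E = card (automorphisms V E)"
  by (simp add: num_aut_def automorphisms_def)

lemma num_aut_pos:
  assumes "finite V"
  shows "num_aut V E > 0"
proof -
  have "restrict id V \<in> automorphisms V E"
    by (auto simp: automorphisms_def bij_betw_def inj_on_def)
  moreover have "finite (automorphisms V E)"
    by (rule finite_subset[of _ "V \<rightarrow>\<^sub>E V"]) (use automorphismsD(1) assms in \<open>auto intro: finite_PiE\<close>)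
  ultimately show ?thesis
    unfolding num_aut_eq_card_automorphisms by (auto simp: card_gt_0_iff)
qed

lemma image_edge_iff:
  assumes "graph V E" "inj_on \<phi> V" "a \<in> V" "b \<in> V"
  shows "{\<phi> a, \<phi> b} \<in> (`) \<phi> ` E \<longleftrightarrow> {a, b} \<in> E"
proof
  assume "{\<phi> a, \<phi> b} \<in> (`) \<phi> ` E"
  then obtain e where e: "e \<in> E" "\<phi> ` {a, b} = \<phi> ` e" by auto
  obtain x y where "e = {x, y}" "x \<in> V" "y \<in> V" by (rule graph_edgeE[OF assms(1) e(1)])
  then have "e \<subseteq> V" "{a, b} \<subseteq> V" using assms(3,4) by auto
  then have "{a, b} = e" using inj_on_image_eq_iff[OF assms(2)] e(2) by metis
  then show "{a, b} \<in> E" using e(1) by simp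
next
  assume "{a, b} \<in> E"
  then have "\<phi> ` {a, b} \<in> (`) \<phi> ` E" by (rule imageI)
  then show "{\<phi> a, \<phi> b} \<in> (`) \<phi> ` E" by simp
qed

lemma automorphism_image_edges:
  assumes "graph V E" "\<sigma> \<in> automorphisms V E"
  shows "(`) \<sigma> ` E = E"
proof -
  have \<sigma>: "bij_betw \<sigma> V V" "\<And>u v. u \<in> V \<Longrightarrow> v \<in> V \<Longrightarrow> {u, v} \<in> E \<longleftrightarrow> {\<sigma> u, \<sigma> v} \<in> E"
    using automorphismsD[OF assms(2)] by blast+
  show ?thesis
  proof
    show "(`) \<sigma> ` E \<subseteq> E"
    proof (rule image_subsetI)
      fix e assume e: "e \<in> E"
      then obtain a b where "e = {a, b}" "a \<in> V" "b \<in> V" by (rule graph_edgeE[OF assms(1)])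
      then show "\<sigma> ` e \<in> E" using \<sigma>(2)[of a b] e by simp
    qed
    show "E \<subseteq> (`) \<sigma> ` E"
    proof
      fix e assume e: "e \<in> E"
      then obtain x y where xy: "e = {x, y}" "x \<in> V" "y \<in> V" by (rule graph_edgeE[OF assms(1)])
      then obtain x' y' where x'y': "x' \<in> V" "y' \<in> V" "x = \<sigma> x'" "y = \<sigma> y'"
        using \<sigma>(1) unfolding bij_betw_def by blast
      then have "{x', y'} \<in> E" using \<sigma>(2)[OF x'y'(1,2)] e xy(1) by simp
      moreover have "e = \<sigma> ` {x', y'}" using xy(1) x'y'(3,4) by simp
      ultimately show "e \<in> (`) \<sigma> ` E" by (rule rev_image_eqI)
    qed
  qed
qed

lemma compose_embedding_automorphism:
  assumes "graph V E" "\<psi> \<in> embeddings V E HV HE" "\<sigma> \<in> automorphisms V E"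
  shows "compose V \<psi> \<sigma> \<in> embeddings V E HV HE"
    and "image_graph V E (compose V \<psi> \<sigma>) = image_graph V E \<psi>"
proof -
  have \<psi>: "\<psi> \<in> V \<rightarrow>\<^sub>E HV" "inj_on \<psi> V" "\<And>a b. a \<in> V \<Longrightarrow> b \<in> V \<Longrightarrow> {a, b} \<in> E \<Longrightarrow> {\<psi> a, \<psi> b} \<in> HE"
    using assms(2) unfolding embeddings_def by auto
  have \<sigma>: "bij_betw \<sigma> V V" "\<And>u v. u \<in> V \<Longrightarrow> v \<in> V \<Longrightarrow> {u, v} \<in> E \<longleftrightarrow> {\<sigma> u, \<sigma> v} \<in> E"
    using automorphismsD[OF assms(3)] by blast+
  have \<sigma>V: "\<sigma> x \<in> V" if "x \<in> V" for x using \<sigma>(1) that by (meson bij_betwE)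
  have image: "compose V \<psi> \<sigma> ` e = \<psi> ` \<sigma> ` e" if "e \<subseteq> V" for e
    using that by (force simp: compose_def)
  show "compose V \<psi> \<sigma> \<in> embeddings V E HV HE"
    unfolding embeddings_def
  proof (intro CollectI conjI ballI impI)
    show "compose V \<psi> \<sigma> \<in> V \<rightarrow>\<^sub>E HV" using \<psi>(1) \<sigma>V by (auto simp: compose_def)
    show "inj_on (compose V \<psi> \<sigma>) V"
      using \<psi>(2) \<sigma>(1) \<sigma>V unfolding bij_betw_def inj_on_def compose_def by auto
    show "{compose V \<psi> \<sigma> a, compose V \<psi> \<sigma> b} \<in> HE" if "a \<in> V" "b \<in> V" "{a, b} \<in> E" for a b
      using that \<psi>(3)[OF \<sigma>V \<sigma>V] \<sigma>(2)[of a b] by (simp add: compose_def)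
  qed
  have "compose V \<psi> \<sigma> ` V = \<psi> ` V"
    using image[of V] \<sigma>(1) by (simp add: bij_betw_def)
  moreover have "(`) (compose V \<psi> \<sigma>) ` E = (`) \<psi> ` (`) \<sigma> ` E"
    unfolding image_comp
    by (rule image_cong[OF refl]) (simp add: image graph_edge_subset[OF assms(1)])
  ultimately show "image_graph V E (compose V \<psi> \<sigma>) = image_graph V E \<psi>"
    unfolding image_graph_def automorphism_image_edges[OF assms(1,3)] by simp
qed

lemma embeddings_same_image_differ_by_automorphism:
  assumes "graph V E" "\<phi> \<in> embeddings V E HV HE" "\<psi> \<in> embeddings V E HV HE"
    and "image_graph V E \<phi> = image_graph V E \<psi>"
  obtains \<sigma> where "\<sigma> \<in> automorphisms V E" "\<phi> = compose V \<psi> \<sigma>"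
proof -
  have \<phi>: "\<phi> \<in> V \<rightarrow>\<^sub>E HV" "inj_on \<phi> V" and \<psi>: "inj_on \<psi> V"
    using assms(2,3) unfolding embeddings_def by auto
  have imV: "\<phi> ` V = \<psi> ` V" and imE: "(`) \<phi> ` E = (`) \<psi> ` E"
    using assms(4) unfolding image_graph_def by auto
  define \<sigma> where "\<sigma> = compose V (inv_into V \<psi>) \<phi>"
  have \<sigma>V: "\<sigma> x \<in> V" and \<psi>\<sigma>: "\<psi> (\<sigma> x) = \<phi> x" if "x \<in> V" for x
  proof -
    have "\<phi> x \<in> \<psi> ` V" using that imV by blast
    moreover have "\<sigma> x = inv_into V \<psi> (\<phi> x)" using that by (simp add: \<sigma>_def compose_def)
    ultimately show "\<sigma> x \<in> V" "\<psi> (\<sigma> x) = \<phi> x"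
      by (simp_all only: inv_into_into f_inv_into_f)
  qed
  have "inj_on \<sigma> V"
  proof (rule inj_onI)
    fix x y assume "x \<in> V" "y \<in> V" "\<sigma> x = \<sigma> y"
    then have "\<phi> x = \<phi> y" using \<psi>\<sigma> by metis
    then show "x = y" using inj_onD[OF \<phi>(2)] \<open>x \<in> V\<close> \<open>y \<in> V\<close> by blast
  qed
  moreover have "\<sigma> ` V = V"
  proof (rule endo_inj_surj)
    show "finite V" using assms(1) by (simp add: graph_def)
    show "\<sigma> ` V \<subseteq> V" using \<sigma>V by blast
  qed fact
  moreover have "\<forall>u\<in>V. \<forall>v\<in>V. {u, v} \<in> E \<longleftrightarrow> {\<sigma> u, \<sigma> v} \<in> E"
  proof (intro ballI)
    fix u v assume uv: "u \<in> V" "v \<in> V"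
    have "{u, v} \<in> E \<longleftrightarrow> {\<phi> u, \<phi> v} \<in> (`) \<phi> ` E"
      using image_edge_iff[OF assms(1) \<phi>(2) uv] by simp
    also have "\<dots> \<longleftrightarrow> {\<psi> (\<sigma> u), \<psi> (\<sigma> v)} \<in> (`) \<psi> ` E"
      using uv by (simp only: imE \<psi>\<sigma>)
    also have "\<dots> \<longleftrightarrow> {\<sigma> u, \<sigma> v} \<in> E"
      using image_edge_iff[OF assms(1) \<psi> \<sigma>V[OF uv(1)] \<sigma>V[OF uv(2)]] .
    finally show "{u, v} \<in> E \<longleftrightarrow> {\<sigma> u, \<sigma> v} \<in> E" .
  qed
  moreover have "\<sigma> \<in> V \<rightarrow>\<^sub>E V"
    using \<sigma>V by (simp add: PiE_iff) (simp add: \<sigma>_def compose_def)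
  ultimately have "\<sigma> \<in> automorphisms V E"
    unfolding automorphisms_def bij_betw_def by blast
  moreover have "\<phi> = compose V \<psi> \<sigma>"
    by (rule extensionalityI[of _ V]) (use \<phi>(1) \<psi>\<sigma> in \<open>auto simp: compose_def PiE_def\<close>)
  ultimately show ?thesis by (rule that)
qed

lemma card_embeddings_same_image:
  assumes "graph V E" "\<psi> \<in> embeddings V E HV HE"
  shows "card {\<phi> \<in> embeddings V E HV HE. image_graph V E \<phi> = image_graph V E \<psi>}
           = num_aut V E"
proof -
  have "inj_on (compose V \<psi>) (automorphisms V E)"
  proof (rule inj_onI)
    fix \<sigma> \<tau> assume \<sigma>\<tau>: "\<sigma> \<in> automorphisms V E" "\<tau> \<in> automorphisms V E" "compose V \<psi> \<sigma> = compose V \<psi> \<tau>"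
    have "\<sigma> x = \<tau> x" if "x \<in> V" for x
    proof -
      have "\<psi> (\<sigma> x) = \<psi> (\<tau> x)" using fun_cong[OF \<sigma>\<tau>(3), of x] that by (simp add: compose_def)
      moreover have "\<sigma> x \<in> V" "\<tau> x \<in> V" using automorphismsD(1)[OF \<sigma>\<tau>(1)] automorphismsD(1)[OF \<sigma>\<tau>(2)] that by auto
      ultimately show ?thesis using assms(2) by (auto simp: embeddings_def inj_on_def)
    qed
    then show "\<sigma> = \<tau>"
      using automorphismsD(1)[OF \<sigma>\<tau>(1)] automorphismsD(1)[OF \<sigma>\<tau>(2)]
      by (intro extensionalityI[of _ V]) (auto simp: PiE_def)
  qed
  moreover have "compose V \<psi> ` automorphisms V E
      = {\<phi> \<in> embeddings V E HV HE. image_graph V E \<phi> = image_graph V E \<psi>}"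
    using compose_embedding_automorphism[OF assms]
      embeddings_same_image_differ_by_automorphism[OF assms(1) _ assms(2)] by blast
  ultimately show ?thesis
    unfolding num_aut_eq_card_automorphisms by (metis card_image)
qed

lemma subgraph_copies_eq_image_embeddings:
  assumes "graph V E" "graph HV HE"
  shows "{(W, D). W \<subseteq> HV \<and> D \<subseteq> HE \<and> (\<forall>e\<in>D. e \<subseteq> W) \<and> isomorphic V E W D}
         = image_graph V E ` embeddings V E HV HE"
proof (intro equalityI subsetI)
  fix p assume "p \<in> image_graph V E ` embeddings V E HV HE"
  then obtain \<phi> where p: "p = image_graph V E \<phi>" and "\<phi> \<in> embeddings V E HV HE" ..
  then have \<phi>: "\<phi> \<in> V \<rightarrow>\<^sub>E HV" "inj_on \<phi> V"
    "\<And>a b. a \<in> V \<Longrightarrow> b \<in> V \<Longrightarrow> {a, b} \<in> E \<Longrightarrow> {\<phi> a, \<phi> b} \<in> HE"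
    unfolding embeddings_def by auto
  have "isomorphic V E (\<phi> ` V) ((`) \<phi> ` E)"
    unfolding isomorphic_def
    by (rule exI[of _ \<phi>]) (simp add: inj_on_imp_bij_betw[OF \<phi>(2)] image_edge_iff[OF assms(1) \<phi>(2)])
  moreover have "\<phi> ` e \<in> HE \<and> \<phi> ` e \<subseteq> \<phi> ` V" if e: "e \<in> E" for e
  proof -
    obtain a b where "e = {a, b}" "a \<in> V" "b \<in> V" by (rule graph_edgeE[OF assms(1) e])
    then show ?thesis using \<phi>(3) e by simp
  qed
  moreover have "\<phi> ` V \<subseteq> HV" using \<phi>(1) by auto
  ultimately show "p \<in> {(W, D). W \<subseteq> HV \<and> D \<subseteq> HE \<and> (\<forall>e\<in>D. e \<subseteq> W) \<and> isomorphic V E W D}"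
    unfolding p image_graph_def by simp blast
next
  fix p assume "p \<in> {(W, D). W \<subseteq> HV \<and> D \<subseteq> HE \<and> (\<forall>e\<in>D. e \<subseteq> W) \<and> isomorphic V E W D}"
  then obtain W D where p: "p = (W, D)" and WD: "W \<subseteq> HV" "D \<subseteq> HE" "\<forall>e\<in>D. e \<subseteq> W"
    and "isomorphic V E W D"
    by (cases p) simp
  then obtain \<psi> where \<psi>: "bij_betw \<psi> V W" "\<forall>u\<in>V. \<forall>v\<in>V. {u, v} \<in> E \<longleftrightarrow> {\<psi> u, \<psi> v} \<in> D"
    unfolding isomorphic_def by blast
  let ?\<phi> = "restrict \<psi> V"
  have im: "\<psi> ` V = W" and inj: "inj_on \<psi> V" using \<psi>(1) by (auto simp: bij_betw_def)
  have "?\<phi> \<in> embeddings V E HV HE"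
    unfolding embeddings_def using WD im inj \<psi>(2) by (auto simp: inj_on_def)
  moreover have "(`) ?\<phi> ` E = D"
  proof
    show "(`) ?\<phi> ` E \<subseteq> D"
    proof (rule image_subsetI)
      fix e assume e: "e \<in> E"
      then obtain a b where "e = {a, b}" "a \<in> V" "b \<in> V" by (rule graph_edgeE[OF assms(1)])
      then show "?\<phi> ` e \<in> D" using \<psi>(2) e by simp
    qed
    show "D \<subseteq> (`) ?\<phi> ` E"
    proof
      fix d assume d: "d \<in> D"
      then obtain x y where xy: "d = {x, y}" using graph_edgeE[OF assms(2) subsetD[OF WD(2) d]] by blast
      then have "x \<in> W" "y \<in> W" using WD(3) d by auto
      then obtain a b where ab: "a \<in> V" "b \<in> V" "x = \<psi> a" "y = \<psi> b" using im by blast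
      then have "{a, b} \<in> E" using \<psi>(2) d xy by simp
      moreover have "d = ?\<phi> ` {a, b}" using ab xy by simp
      ultimately show "d \<in> (`) ?\<phi> ` E" by (rule rev_image_eqI)
    qed
  qed
  moreover have "?\<phi> ` V = W" using im by simp
  ultimately show "p \<in> image_graph V E ` embeddings V E HV HE"
    unfolding p by (intro image_eqI[of _ _ ?\<phi>]) (simp_all add: image_graph_def)
qed

lemma card_embeddings:
  assumes "graph V E" "graph HV HE"
  shows "card (embeddings V E HV HE) = subgraph_count V E HV HE * num_aut V E"
proof -
  let ?Emb = "embeddings V E HV HE" and ?im = "image_graph V E"
  have "finite ?Emb"
    by (rule finite_subset[of _ "V \<rightarrow>\<^sub>E HV"])
      (use assms in \<open>auto simp: embeddings_def graph_def intro: finite_PiE\<close>)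
  then have "card ?Emb = (\<Sum>p\<in>?im ` ?Emb. card {\<phi> \<in> ?Emb. ?im \<phi> = p})"
    unfolding card_eq_sum by (rule sum.image_gen)
  also have "\<dots> = (\<Sum>p\<in>?im ` ?Emb. num_aut V E)"
    by (rule sum.cong) (auto intro: card_embeddings_same_image[OF assms(1)])
  finally show ?thesis
    unfolding subgraph_count_def subgraph_copies_eq_image_embeddings[OF assms] by simp
qed

section \<open>Counting injective choice functions\<close>

lemma card_inj_PiE_insert:
  assumes "finite A" "a \<notin> A" "\<forall>x\<in>insert a A. finite (T x)"
  shows "card {g \<in> PiE (insert a A) T. inj_on g (insert a A)}
           = (\<Sum>g\<in>{g \<in> PiE A T. inj_on g A}. card (T a - g ` A))"
proof -
  let ?S = "{g \<in> PiE A T. inj_on g A}" and ?S' = "{g \<in> PiE (insert a A) T. inj_on g (insert a A)}"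
  have "bij_betw (\<lambda>g. (restrict g A, g a)) ?S' (SIGMA g:?S. T a - g ` A)"
  proof (rule bij_betw_byWitness[where f' = "\<lambda>(g, y). g(a := y)"])
    show "\<forall>g\<in>?S'. (\<lambda>(g, y). g(a := y)) (restrict g A, g a) = g"
      by (auto simp: fun_eq_iff PiE_def extensional_def)
    show "\<forall>p\<in>(SIGMA g:?S. T a - g ` A). (\<lambda>g. (restrict g A, g a)) ((\<lambda>(g, y). g(a := y)) p) = p"
      using assms(2) by (auto simp: fun_eq_iff PiE_def extensional_def)
    show "(\<lambda>g. (restrict g A, g a)) ` ?S' \<subseteq> (SIGMA g:?S. T a - g ` A)"
      using assms(2) by (auto simp: inj_on_def)
    show "(\<lambda>(g, y). g(a := y)) ` (SIGMA g:?S. T a - g ` A) \<subseteq> ?S'"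
    proof clarify
      fix g y assume g: "g \<in> PiE A T" "inj_on g A" and y: "y \<in> T a" "y \<notin> g ` A"
      have "g(a := y) ` A = g ` A" by (rule image_cong) (use assms(2) in auto)
      then have "inj_on (g(a := y)) (insert a A)"
        using g(2) y(2) assms(2) by (simp add: inj_on_fun_updI)
      then show "g(a := y) \<in> PiE (insert a A) T \<and> inj_on (g(a := y)) (insert a A)"
        using g(1) y(1) assms(2) by (simp add: PiE_fun_upd)
    qed
  qed
  then have "card ?S' = card (SIGMA g:?S. T a - g ` A)" by (rule bij_betw_same_card)
  moreover have "finite (PiE A T)" using assms by (simp add: finite_PiE)
  then have "finite ?S" by (rule rev_finite_subset) blast
  moreover have "\<forall>g\<in>?S. finite (T a - g ` A)" using assms(3) by simp
  ultimately show ?thesis by (simp only: card_SigmaI)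
qed

lemma card_inj_PiE_ge:
  assumes "finite A" "\<forall>x\<in>A. finite (T x)"
  shows "(\<Prod>x\<in>A. card (T x) - card A) \<le> card {g \<in> PiE A T. inj_on g A}"
  using assms
proof (induction A rule: finite_induct)
  case empty
  then show ?case by simp
next
  case (insert a A)
  let ?S = "{g \<in> PiE A T. inj_on g A}"
  have "(\<Prod>x\<in>insert a A. card (T x) - card (insert a A))
      \<le> (card (T a) - card A) * (\<Prod>x\<in>A. card (T x) - card A)"
    using insert.hyps by (auto intro!: mult_mono prod_mono)
  also have "\<dots> \<le> (card (T a) - card A) * card ?S"
    using insert by (intro mult_left_mono) auto
  also have "\<dots> = (\<Sum>g\<in>?S. card (T a) - card A)" by simp
  also have "\<dots> \<le> (\<Sum>g\<in>?S. card (T a - g ` A))"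
  proof (rule sum_mono)
    fix g assume "g \<in> ?S"
    have "card (T a) - card A \<le> card (T a) - card (g ` A)"
      using card_image_le[OF insert.hyps(1), of g] by (rule diff_le_mono2)
    also have "\<dots> \<le> card (T a - g ` A)"
      using insert.hyps(1) by (intro diff_card_le_card_Diff) simp
    finally show "card (T a) - card A \<le> card (T a - g ` A)" .
  qed
  also have "\<dots> = card {g \<in> PiE (insert a A) T. inj_on g (insert a A)}"
    by (rule card_inj_PiE_insert[symmetric]) (use insert in auto)
  finally show ?case .
qed

lemma card_inj_PiE_le:
  assumes "finite A" "\<forall>x\<in>A. finite (T x)"
  shows "card {g \<in> PiE A T. inj_on g A} \<le> (\<Prod>x\<in>A. card (T x))"
proof -
  have "card {g \<in> PiE A T. inj_on g A} \<le> card (PiE A T)"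
    using assms by (intro card_mono) (auto intro: finite_PiE)
  then show ?thesis using assms(1) by (simp add: card_PiE)
qed

lemma prod_diff_abs_le:
  fixes a b :: "'i \<Rightarrow> real"
  assumes "finite A" "M \<ge> 1"
    and "\<And>x. x \<in> A \<Longrightarrow> \<bar>a x - b x\<bar> \<le> \<eta>"
    and "\<And>x. x \<in> A \<Longrightarrow> \<bar>a x\<bar> \<le> M" "\<And>x. x \<in> A \<Longrightarrow> \<bar>b x\<bar> \<le> M"
  shows "\<bar>(\<Prod>x\<in>A. a x) - (\<Prod>x\<in>A. b x)\<bar> \<le> real (card A) * M ^ card A * \<eta>"
  using assms(1,3-5)
proof (induction A rule: finite_induct)
  case empty
  then show ?case by simp
next
  case (insert c A)
  let ?m = "card A"
  have \<eta>: "\<eta> \<ge> 0" using insert.prems(1)[of c] by simp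
  have IH: "\<bar>(\<Prod>x\<in>A. a x) - (\<Prod>x\<in>A. b x)\<bar> \<le> real ?m * M ^ ?m * \<eta>"
    using insert by simp
  have bound_b: "\<bar>\<Prod>x\<in>A. b x\<bar> \<le> M ^ ?m"
    unfolding abs_prod using insert.prems(3) assms(2) by (intro prod_le_power) auto
  have "(\<Prod>x\<in>insert c A. a x) - (\<Prod>x\<in>insert c A. b x)
      = a c * ((\<Prod>x\<in>A. a x) - (\<Prod>x\<in>A. b x)) + (a c - b c) * (\<Prod>x\<in>A. b x)"
    using insert.hyps by (simp add: algebra_simps)
  also have "\<bar>\<dots>\<bar> \<le> M * (real ?m * M ^ ?m * \<eta>) + \<eta> * M ^ ?m"
  proof (rule order_trans[OF abs_triangle_ineq add_mono])
    show "\<bar>a c * ((\<Prod>x\<in>A. a x) - (\<Prod>x\<in>A. b x))\<bar> \<le> M * (real ?m * M ^ ?m * \<eta>)"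
      unfolding abs_mult using insert.prems(2) IH assms(2) by (intro mult_mono) auto
    show "\<bar>(a c - b c) * (\<Prod>x\<in>A. b x)\<bar> \<le> \<eta> * M ^ ?m"
      unfolding abs_mult using insert.prems(1) bound_b \<eta> by (intro mult_mono) auto
  qed
  also have "\<dots> \<le> M * (real ?m * M ^ ?m * \<eta>) + \<eta> * M ^ Suc ?m"
    using assms(2) \<eta> by (intro add_left_mono mult_left_mono) auto
  also have "\<dots> = real (card (insert c A)) * M ^ card (insert c A) * \<eta>"
    using insert.hyps by (simp add: algebra_simps)
  finally show ?case .
qed

lemma normalized_count_close:
  fixes F T m n \<delta> w :: real
  assumes "n > 0" "1 / n \<le> \<delta>" "m \<ge> 0" "T - m \<le> F" "F \<le> T" "\<bar>w - T / n\<bar> \<le> \<delta>"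
  shows "\<bar>F / n - w\<bar> \<le> (m + 1) * \<delta>"
proof -
  have "m / n \<le> m * \<delta>" using mult_left_mono[OF assms(2,3)] by simp
  moreover have "(T - m) / n \<le> F / n" "F / n \<le> T / n"
    using assms(1,4,5) by (simp_all add: divide_right_mono)
  ultimately show ?thesis
    using assms(6) by (simp add: diff_divide_distrib abs_le_iff algebra_simps)
qed

lemma prod_counts_approx:
  fixes F T :: "'i \<Rightarrow> nat" and w :: "'i \<Rightarrow> real" and n :: nat and m :: real
  assumes "finite A" "n > 0" "1 / real n \<le> \<delta>" "\<delta> \<le> 1" "m \<ge> 0"
    and "\<And>x. x \<in> A \<Longrightarrow> T x \<le> n"
    and "\<And>x. x \<in> A \<Longrightarrow> real (T x) - m \<le> real (F x) \<and> F x \<le> T x"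
    and "\<And>x. x \<in> A \<Longrightarrow> \<bar>w x - real (T x) / real n\<bar> \<le> \<delta>"
  shows "\<bar>real (\<Prod>x\<in>A. F x) - real n ^ card A * (\<Prod>x\<in>A. w x)\<bar>
           \<le> real n ^ card A * (real (card A) * 2 ^ card A * ((m + 1) * \<delta>))"
proof -
  have n: "real n > 0" using assms(2) by simp
  have "\<bar>(\<Prod>x\<in>A. real (F x) / real n) - (\<Prod>x\<in>A. w x)\<bar>
      \<le> real (card A) * 2 ^ card A * ((m + 1) * \<delta>)"
  proof (rule prod_diff_abs_le[OF assms(1)])
    fix x assume x: "x \<in> A"
    have T: "0 \<le> real (T x) / real n" "real (T x) / real n \<le> 1"
      using assms(6)[OF x] n by simp_all
    have "0 \<le> real (F x) / real n" "real (F x) / real n \<le> real (T x) / real n"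
      using assms(7)[OF x] n by (simp_all add: divide_right_mono)
    then show "\<bar>real (F x) / real n\<bar> \<le> 2" using T by linarith
    show "\<bar>w x\<bar> \<le> 2"
      using assms(4) assms(8)[OF x, unfolded abs_le_iff] T unfolding abs_le_iff by linarith
    show "\<bar>real (F x) / real n - w x\<bar> \<le> (m + 1) * \<delta>"
      using assms(7)[OF x] by (intro normalized_count_close[OF n assms(3,5) _ _ assms(8)[OF x]]) auto
  qed simp
  moreover have "real (\<Prod>x\<in>A. F x) = real n ^ card A * (\<Prod>x\<in>A. real (F x) / real n)"
    using n by (simp add: prod_dividef)
  ultimately show ?thesis
    using n by (simp add: abs_mult right_diff_distrib[symmetric] mult_left_mono)
qed

lemma card_inj_PiE_approx:
  fixes T :: "'i \<Rightarrow> 'j set" and w :: "'i \<Rightarrow> real" and n :: nat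
  assumes "finite A" "\<forall>x\<in>A. finite (T x)" "n > 0" "1 / real n \<le> \<delta>" "\<delta> \<le> 1"
    and "\<And>x. x \<in> A \<Longrightarrow> card (T x) \<le> n"
    and "\<And>x. x \<in> A \<Longrightarrow> \<bar>w x - real (card (T x)) / real n\<bar> \<le> \<delta>"
  shows "\<bar>real (card {g \<in> PiE A T. inj_on g A}) - real n ^ card A * (\<Prod>x\<in>A. w x)\<bar>
           \<le> real n ^ card A * (real (card A) * 2 ^ card A * ((real (card A) + 1) * \<delta>))"
proof -
  define t where "t = real n ^ card A * (\<Prod>x\<in>A. w x)"
  define e where "e = real n ^ card A * (real (card A) * 2 ^ card A * ((real (card A) + 1) * \<delta>))"
  define lo where "lo = (\<Prod>x\<in>A. card (T x) - card A)"
  define hi where "hi = (\<Prod>x\<in>A. card (T x))"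
  have "\<bar>real lo - t\<bar> \<le> e" unfolding lo_def t_def e_def
    by (rule prod_counts_approx[OF assms(1,3-5) _ assms(6) _ assms(7)]) auto
  moreover have "\<bar>real hi - t\<bar> \<le> e" unfolding hi_def t_def e_def
    by (rule prod_counts_approx[OF assms(1,3-5) _ assms(6) _ assms(7)]) auto
  moreover have "real lo \<le> real (card {g \<in> PiE A T. inj_on g A})"
    using card_inj_PiE_ge[OF assms(1,2)] unfolding lo_def by linarith
  moreover have "real (card {g \<in> PiE A T. inj_on g A}) \<le> real hi"
    using card_inj_PiE_le[OF assms(1,2)] unfolding hi_def by linarith
  ultimately show ?thesis unfolding t_def[symmetric] e_def[symmetric] by (simp add: abs_le_iff)
qed

section \<open>Embeddings into the host graph\<close>

lemma in_host_V: "x \<in> host_V r ns \<longleftrightarrow> x = None \<or> (\<exists>i j. x = Some (i, j) \<and> i < r \<and> j < ns i)"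
  unfolding host_V_def by auto

lemma Some_Some_in_host_E:
  "{Some (i, j), Some (i', j')} \<in> host_E r ns ds \<longleftrightarrow> i < r \<and> j < ns i \<and> i' < r \<and> j' < ns i' \<and> i \<noteq> i'"
  unfolding host_E_def by (auto simp: doubleton_eq_iff)

lemma None_Some_in_host_E: "{None, Some (i, j)} \<in> host_E r ns ds \<longleftrightarrow> i < r \<and> j < ds i"
  unfolding host_E_def by (auto simp: doubleton_eq_iff)

lemma graph_host:
  assumes "\<forall>i<r. ds i \<le> ns i"
  shows "graph (host_V r ns) (host_E r ns ds)"
  unfolding graph_def
proof (intro conjI ballI)
  have "host_V r ns = insert None (Some ` (SIGMA i:{..<r}. {..<ns i}))"
    unfolding host_V_def by auto
  then show "finite (host_V r ns)" by simp
next
  fix e assume "e \<in> host_E r ns ds"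
  then consider (parts) i j i' j' where "e = {Some (i, j), Some (i', j')}" "i < r" "j < ns i"
      "i' < r" "j' < ns i'" "i \<noteq> i'"
    | (apex) i j where "e = {None, Some (i, j)}" "i < r" "j < ds i"
    unfolding host_E_def by blast
  then show "\<exists>u v. e = {u, v} \<and> u \<noteq> v \<and> u \<in> host_V r ns \<and> v \<in> host_V r ns"
  proof cases
    case parts
    then show ?thesis unfolding in_host_V by blast
  next
    case apex
    then have "j < ns i" using assms by (meson less_le_trans)
    then show ?thesis using apex unfolding in_host_V by blast
  qed
qed

definition deletion_colorings :: "nat \<Rightarrow> 'a set \<Rightarrow> 'a set set \<Rightarrow> 'a \<Rightarrow> ('a \<Rightarrow> nat) set" where
  "deletion_colorings r V E u =
     {c \<in> (V - {u}) \<rightarrow>\<^sub>E {..<r}. proper_coloring (V - {u}) (del_vertex_edges E u) r c}"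

definition slot_count :: "(nat \<Rightarrow> nat) \<Rightarrow> (nat \<Rightarrow> nat) \<Rightarrow> 'a set set \<Rightarrow> 'a \<Rightarrow> ('a \<Rightarrow> nat) \<Rightarrow> 'a \<Rightarrow> nat" where
  "slot_count ns ds E u c v = (if {u, v} \<in> E then ds (c v) else ns (c v))"

definition slots :: "(nat \<Rightarrow> nat) \<Rightarrow> (nat \<Rightarrow> nat) \<Rightarrow> 'a set set \<Rightarrow> 'a \<Rightarrow> ('a \<Rightarrow> nat) \<Rightarrow> 'a \<Rightarrow> (nat \<times> nat) option set" where
  "slots ns ds E u c v = (\<lambda>j. Some (c v, j)) ` {..<slot_count ns ds E u c v}"

definition slot_weight :: "nat \<Rightarrow> (nat \<Rightarrow> real) \<Rightarrow> 'a set set \<Rightarrow> 'a \<Rightarrow> ('a \<Rightarrow> nat) \<Rightarrow> 'a \<Rightarrow> real" where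
  "slot_weight r \<xi> E u c v = (if {u, v} \<in> E then \<xi> (c v) else 1 / real r)"

definition apex_embeddings ::
  "nat \<Rightarrow> (nat \<Rightarrow> nat) \<Rightarrow> (nat \<Rightarrow> nat) \<Rightarrow> 'a set \<Rightarrow> 'a set set \<Rightarrow> 'a \<Rightarrow> ('a \<Rightarrow> nat) \<Rightarrow> ('a \<Rightarrow> (nat \<times> nat) option) set" where
  "apex_embeddings r ns ds V E u c = {\<phi> \<in> V \<rightarrow>\<^sub>E host_V r ns. inj_on \<phi> V \<and> \<phi> u = None \<and>
     (\<forall>v\<in>V - {u}. \<phi> v \<in> slots ns ds E u c v)}"

lemma in_slots: "x \<in> slots ns ds E u c v \<longleftrightarrow> (\<exists>j. x = Some (c v, j) \<and> j < slot_count ns ds E u c v)"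
  unfolding slots_def by auto

lemma card_slots: "card (slots ns ds E u c v) = slot_count ns ds E u c v"
  unfolding slots_def by (simp add: card_image inj_on_def)

lemma deletion_coloringsD:
  assumes "c \<in> deletion_colorings r V E u" "v \<in> V - {u}"
  shows "c v < r"
  using assms unfolding deletion_colorings_def by auto

lemma finite_deletion_colorings:
  assumes "finite V"
  shows "finite (deletion_colorings r V E u)"
proof -
  have "finite ((V - {u}) \<rightarrow>\<^sub>E {..<r})" using assms by (simp add: finite_PiE)
  then show ?thesis by (rule rev_finite_subset) (auto simp: deletion_colorings_def)
qed

lemma critical_vertex_if_deletion_colorings:
  assumes "graph V E" "chromatic_number V E = r + 1" "u \<in> V" "deletion_colorings r V E u \<noteq> {}"
  shows "critical_vertex r V E u"
proof -
  obtain c where "c \<in> deletion_colorings r V E u" using assms(4) by blast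
  then show ?thesis
    unfolding deletion_colorings_def by (blast intro: critical_vertexI[OF assms(1-3)])
qed

lemma prod_color_classes_eq_prod_slot_weight:
  assumes "finite V" "c \<in> deletion_colorings r V E u"
  shows "(\<Prod>i<r. (1 / real r ^ card {v \<in> V - {u}. {u, v} \<notin> E \<and> c v = i}) *
                 \<xi> i ^ card {v \<in> V - {u}. {u, v} \<in> E \<and> c v = i})
           = (\<Prod>v\<in>V - {u}. slot_weight r \<xi> E u c v)"
proof -
  have "c ` (V - {u}) \<subseteq> {..<r}" using deletion_coloringsD[OF assms(2)] by auto
  then have "(\<Prod>v\<in>V - {u}. slot_weight r \<xi> E u c v)
      = (\<Prod>i<r. \<Prod>v\<in>{v \<in> V - {u}. c v = i}. slot_weight r \<xi> E u c v)"
    using prod.group[of "V - {u}" "{..<r}" c "slot_weight r \<xi> E u c"] assms(1) by simp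
  also have "\<dots> = (\<Prod>i<r. (1 / real r ^ card {v \<in> V - {u}. {u, v} \<notin> E \<and> c v = i}) *
                 \<xi> i ^ card {v \<in> V - {u}. {u, v} \<in> E \<and> c v = i})"
  proof (rule prod.cong[OF refl])
    fix i
    let ?C = "{v \<in> V - {u}. c v = i}"
    have "(\<Prod>v\<in>?C. slot_weight r \<xi> E u c v) = (\<Prod>v\<in>?C. if {u, v} \<in> E then \<xi> i else 1 / real r)"
      by (rule prod.cong) (auto simp: slot_weight_def)
    also have "\<dots> = (\<Prod>v\<in>?C \<inter> {v. {u, v} \<in> E}. \<xi> i) * (\<Prod>v\<in>?C \<inter> - {v. {u, v} \<in> E}. 1 / real r)"
      using assms(1) by (intro prod.If_cases) simp
    also have "?C \<inter> {v. {u, v} \<in> E} = {v \<in> V - {u}. {u, v} \<in> E \<and> c v = i}" by auto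
    also have "?C \<inter> - {v. {u, v} \<in> E} = {v \<in> V - {u}. {u, v} \<notin> E \<and> c v = i}" by auto
    finally show "(\<Prod>v\<in>?C. slot_weight r \<xi> E u c v) =
        (1 / real r ^ card {v \<in> V - {u}. {u, v} \<notin> E \<and> c v = i}) *
        \<xi> i ^ card {v \<in> V - {u}. {u, v} \<in> E \<and> c v = i}"
      by (simp add: power_one_over mult.commute)
  qed
  finally show ?thesis by simp
qed

lemma slot_weight_close:
  fixes n :: nat
  assumes "n > 0" "c v < r"
    and "\<bar>real (ns (c v)) - real n / real r\<bar> \<le> \<delta> * real n"
    and "\<bar>\<xi> (c v) - real (ds (c v)) / real n\<bar> \<le> \<delta>"
  shows "\<bar>slot_weight r \<xi> E u c v - real (slot_count ns ds E u c v) / real n\<bar> \<le> \<delta>"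
proof (cases "{u, v} \<in> E")
  case True
  then show ?thesis using assms(4) by (simp add: slot_weight_def slot_count_def)
next
  case False
  have "1 / real r - real (ns (c v)) / real n = - (real (ns (c v)) - real n / real r) / real n"
    using assms(1,2) by (simp add: field_simps)
  then have "\<bar>1 / real r - real (ns (c v)) / real n\<bar> = \<bar>real (ns (c v)) - real n / real r\<bar> / real n"
    using assms(1) by (simp add: abs_minus_commute)
  also have "\<dots> \<le> \<delta>" using assms(1,3) by (simp add: divide_le_eq)
  finally show ?thesis using False by (simp add: slot_weight_def slot_count_def)
qed

section \<open>Decomposition by apex vertex and colouring\<close>

context
  fixes r :: nat and ns ds :: "nat \<Rightarrow> nat" and V :: "'a set" and E :: "'a set set"
  assumes graph: "graph V E" and chromatic: "chromatic_number V E = r + 1"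
    and ds_le_ns: "\<forall>i<r. ds i \<le> ns i"
begin

lemma slot_count_le:
  assumes "c \<in> deletion_colorings r V E u" "v \<in> V - {u}"
  shows "slot_count ns ds E u c v \<le> ns (c v)"
  using ds_le_ns deletion_coloringsD[OF assms] by (simp add: slot_count_def)

lemma host_embedding_hits_apex:
  assumes "\<phi> \<in> embeddings V E (host_V r ns) (host_E r ns ds)"
  shows "\<exists>u\<in>V. \<phi> u = None"
proof (rule ccontr)
  assume none: "\<not> (\<exists>u\<in>V. \<phi> u = None)"
  have parts: "\<exists>i j. \<phi> v = Some (i, j) \<and> i < r" if v: "v \<in> V" for v
  proof -
    have "\<phi> v \<in> host_V r ns" using assms v by (auto simp: embeddings_def)
    then show ?thesis using none v by (auto simp: in_host_V)
  qed
  have "proper_coloring V E r (\<lambda>v. fst (the (\<phi> v)))"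
    unfolding proper_coloring_def
  proof (intro conjI ballI impI)
    show "fst (the (\<phi> v)) < r" if "v \<in> V" for v using parts[OF that] by auto
    fix a b assume ab: "a \<in> V" "b \<in> V" "{a, b} \<in> E"
    obtain i j i' j' where "\<phi> a = Some (i, j)" "\<phi> b = Some (i', j')"
      using parts ab(1,2) by blast
    moreover have "{\<phi> a, \<phi> b} \<in> host_E r ns ds"
      using assms ab unfolding embeddings_def by blast
    ultimately show "fst (the (\<phi> a)) \<noteq> fst (the (\<phi> b))"
      by (simp add: Some_Some_in_host_E)
  qed
  then show False using chromatic chromatic_number_le by fastforce
qed

lemma host_embedding_in_apex_embeddings:
  assumes \<phi>: "\<phi> \<in> embeddings V E (host_V r ns) (host_E r ns ds)" and u: "u \<in> V" "\<phi> u = None"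
  defines "c \<equiv> restrict (\<lambda>v. fst (the (\<phi> v))) (V - {u})"
  shows "c \<in> deletion_colorings r V E u" and "\<phi> \<in> apex_embeddings r ns ds V E u c"
proof -
  have \<phi>V: "\<phi> \<in> V \<rightarrow>\<^sub>E host_V r ns" and inj: "inj_on \<phi> V"
    and \<phi>E: "\<And>a b. a \<in> V \<Longrightarrow> b \<in> V \<Longrightarrow> {a, b} \<in> E \<Longrightarrow> {\<phi> a, \<phi> b} \<in> host_E r ns ds"
    using \<phi> unfolding embeddings_def by auto
  have parts: "\<exists>j. \<phi> v = Some (c v, j) \<and> c v < r \<and> j < ns (c v)" if v: "v \<in> V - {u}" for v
  proof -
    have "\<phi> v \<noteq> \<phi> u" using inj_onD[OF inj, of v u] u(1) v by blast
    then have "\<phi> v \<noteq> None" using u(2) by simp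
    moreover have "\<phi> v \<in> host_V r ns" using \<phi>V v by auto
    ultimately obtain i j where "\<phi> v = Some (i, j)" "i < r" "j < ns i"
      unfolding in_host_V by auto
    then show ?thesis using v by (simp add: c_def)
  qed
  have c_ne: "c a \<noteq> c b" if "a \<in> V - {u}" "b \<in> V - {u}" "{a, b} \<in> E" for a b
    using parts[OF that(1)] parts[OF that(2)] \<phi>E[of a b] that by (auto simp: Some_Some_in_host_E)
  show "c \<in> deletion_colorings r V E u"
    unfolding deletion_colorings_def proper_coloring_def del_vertex_edges_def
    using parts c_ne by (auto simp: c_def)
  have "\<phi> v \<in> slots ns ds E u c v" if v: "v \<in> V - {u}" for v
  proof -
    obtain j where j: "\<phi> v = Some (c v, j)" "c v < r" "j < ns (c v)" using parts[OF v] by blast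
    moreover have "j < ds (c v)" if "{u, v} \<in> E"
      using \<phi>E[of u v] that v u j by (simp add: None_Some_in_host_E)
    ultimately show ?thesis by (auto simp: in_slots slot_count_def)
  qed
  then show "\<phi> \<in> apex_embeddings r ns ds V E u c"
    unfolding apex_embeddings_def using \<phi>V inj u(2) by blast
qed

lemma apex_embeddings_subset:
  assumes u: "u \<in> V" and c: "c \<in> deletion_colorings r V E u"
  shows "apex_embeddings r ns ds V E u c \<subseteq> embeddings V E (host_V r ns) (host_E r ns ds)"
proof
  fix \<phi> assume "\<phi> \<in> apex_embeddings r ns ds V E u c"
  then have \<phi>V: "\<phi> \<in> V \<rightarrow>\<^sub>E host_V r ns" and inj: "inj_on \<phi> V" and \<phi>u: "\<phi> u = None"
    and slot: "\<And>v. v \<in> V - {u} \<Longrightarrow> \<exists>j. \<phi> v = Some (c v, j) \<and> j < slot_count ns ds E u c v"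
    unfolding apex_embeddings_def in_slots by auto
  have cr: "c v < r" if "v \<in> V - {u}" for v using deletion_coloringsD[OF c that] .
  have apex_edge: "{\<phi> u, \<phi> v} \<in> host_E r ns ds" if "v \<in> V - {u}" "{u, v} \<in> E" for v
    using slot[OF that(1)] cr[OF that(1)] \<phi>u that(2)
    by (auto simp: slot_count_def None_Some_in_host_E)
  have "{\<phi> a, \<phi> b} \<in> host_E r ns ds" if ab: "a \<in> V" "b \<in> V" "{a, b} \<in> E" for a b
  proof -
    have "a \<noteq> b" using ab(3) graph_no_loop[OF graph] by auto
    consider "a = u" | "b = u" | "a \<in> V - {u}" "b \<in> V - {u}" using ab by blast
    then show ?thesis
    proof cases
      case 1 then show ?thesis using apex_edge[of b] ab \<open>a \<noteq> b\<close> by simp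
    next
      case 2 then show ?thesis using apex_edge[of a] ab \<open>a \<noteq> b\<close> by (simp add: insert_commute)
    next
      case 3
      then have "{a, b} \<in> del_vertex_edges E u" using ab(3) by (auto simp: del_vertex_edges_def)
      then have "c a \<noteq> c b"
        using c 3 unfolding deletion_colorings_def proper_coloring_def by blast
      moreover obtain j j' where "\<phi> a = Some (c a, j)" "j < slot_count ns ds E u c a"
        "\<phi> b = Some (c b, j')" "j' < slot_count ns ds E u c b"
        using slot[OF 3(1)] slot[OF 3(2)] by blast
      moreover have "slot_count ns ds E u c a \<le> ns (c a)" "slot_count ns ds E u c b \<le> ns (c b)"
        using slot_count_le[OF c] 3 by blast+
      ultimately show ?thesis using cr 3 by (simp add: Some_Some_in_host_E)
    qed
  qed
  then show "\<phi> \<in> embeddings V E (host_V r ns) (host_E r ns ds)"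
    unfolding embeddings_def using \<phi>V inj by blast
qed

lemma host_embeddings_eq_UN_apex_embeddings:
  "embeddings V E (host_V r ns) (host_E r ns ds)
     = (\<Union>(u, c)\<in>Sigma V (deletion_colorings r V E). apex_embeddings r ns ds V E u c)"
proof (intro equalityI subsetI)
  fix \<phi> assume \<phi>: "\<phi> \<in> embeddings V E (host_V r ns) (host_E r ns ds)"
  then obtain u where "u \<in> V" "\<phi> u = None" using host_embedding_hits_apex by blast
  then show "\<phi> \<in> (\<Union>(u, c)\<in>Sigma V (deletion_colorings r V E). apex_embeddings r ns ds V E u c)"
    using host_embedding_in_apex_embeddings[OF \<phi>] by blast
qed (use apex_embeddings_subset in blast)

lemma apex_embeddings_disjoint:
  assumes "c \<in> deletion_colorings r V E u" "c' \<in> deletion_colorings r V E u'" "(u, c) \<noteq> (u', c')"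
    "u \<in> V" "u' \<in> V"
  shows "apex_embeddings r ns ds V E u c \<inter> apex_embeddings r ns ds V E u' c' = {}"
proof (rule ccontr)
  assume "\<not> ?thesis"
  then obtain \<phi> where \<phi>: "\<phi> \<in> apex_embeddings r ns ds V E u c" "\<phi> \<in> apex_embeddings r ns ds V E u' c'"
    by blast
  then have "\<phi> u = \<phi> u'" "inj_on \<phi> V" unfolding apex_embeddings_def by auto
  then have "u = u'" using assms(4,5) by (auto dest: inj_onD)
  then have "c \<noteq> c'" using assms(3) by simp
  moreover have "c \<in> extensional (V - {u})" "c' \<in> extensional (V - {u})"
    using assms(1,2) \<open>u = u'\<close> unfolding deletion_colorings_def by (auto simp: PiE_def)
  ultimately obtain v where v: "v \<in> V - {u}" "c v \<noteq> c' v"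
    by (metis extensionalityI)
  have "\<phi> v \<in> slots ns ds E u c v" "\<phi> v \<in> slots ns ds E u c' v"
    using \<phi> v(1) \<open>u = u'\<close> unfolding apex_embeddings_def by auto
  then show False using v(2) by (auto simp: in_slots)
qed

lemma card_apex_embeddings:
  assumes "u \<in> V" "c \<in> deletion_colorings r V E u"
  shows "card (apex_embeddings r ns ds V E u c)
           = card {g \<in> PiE (V - {u}) (slots ns ds E u c). inj_on g (V - {u})}"
proof -
  let ?G = "{g \<in> PiE (V - {u}) (slots ns ds E u c). inj_on g (V - {u})}"
  have slots_host: "slots ns ds E u c v \<subseteq> host_V r ns" if "v \<in> V - {u}" for v
    using slot_count_le[OF assms(2) that] deletion_coloringsD[OF assms(2) that]
    by (auto simp: in_slots in_host_V)
  have "bij_betw (\<lambda>\<phi>. restrict \<phi> (V - {u})) (apex_embeddings r ns ds V E u c) ?G"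
  proof (rule bij_betw_byWitness[where f' = "\<lambda>g. g(u := None)"])
    show "\<forall>\<phi>\<in>apex_embeddings r ns ds V E u c. (restrict \<phi> (V - {u}))(u := None) = \<phi>"
      unfolding apex_embeddings_def by (auto simp: fun_eq_iff PiE_def extensional_def)
    show "\<forall>g\<in>?G. restrict (g(u := None)) (V - {u}) = g"
      by (auto simp: fun_eq_iff PiE_def extensional_def)
    show "(\<lambda>\<phi>. restrict \<phi> (V - {u})) ` apex_embeddings r ns ds V E u c \<subseteq> ?G"
    proof (rule image_subsetI)
      fix \<phi> assume "\<phi> \<in> apex_embeddings r ns ds V E u c"
      then have "inj_on \<phi> (V - {u})" "\<forall>v\<in>V - {u}. \<phi> v \<in> slots ns ds E u c v"
        unfolding apex_embeddings_def by (auto intro: inj_on_subset)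
      then show "restrict \<phi> (V - {u}) \<in> ?G" by (simp add: restrict_PiE_iff)
    qed
    show "(\<lambda>g. g(u := None)) ` ?G \<subseteq> apex_embeddings r ns ds V E u c"
    proof clarify
      fix g assume g: "g \<in> PiE (V - {u}) (slots ns ds E u c)" "inj_on g (V - {u})"
      have V: "insert u (V - {u}) = V" using assms(1) by blast
      have "None \<notin> g ` (V - {u})"
      proof
        assume "None \<in> g ` (V - {u})"
        then obtain v where v: "v \<in> V - {u}" and "None = g v" ..
        moreover have "g v \<in> slots ns ds E u c v" using g(1) v by (rule PiE_mem)
        ultimately show False by (simp add: in_slots)
      qed
      moreover have "g(u := None) ` (V - {u}) = g ` (V - {u})" by (rule image_cong) auto
      moreover have "inj_on (g(u := None)) (V - {u}) \<longleftrightarrow> inj_on g (V - {u})"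
        by (rule inj_on_cong) simp
      ultimately have "inj_on (g(u := None)) (insert u (V - {u}))"
        using g(2) unfolding inj_on_insert by simp
      then have "inj_on (g(u := None)) V" unfolding V .
      moreover have "g \<in> PiE (V - {u}) (\<lambda>_. host_V r ns)"
        using g(1) slots_host by (auto simp: PiE_iff)
      then have "g(u := None) \<in> V \<rightarrow>\<^sub>E host_V r ns"
        using PiE_fun_upd[of None "\<lambda>_. host_V r ns" u g "V - {u}"] V by (simp add: in_host_V)
      moreover have "\<forall>v\<in>V - {u}. (g(u := None)) v \<in> slots ns ds E u c v"
        using g(1) by (simp add: PiE_iff)
      ultimately show "g(u := None) \<in> apex_embeddings r ns ds V E u c"
        unfolding apex_embeddings_def by simp
    qed
  qed
  then show ?thesis by (rule bij_betw_same_card)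
qed

lemma card_apex_embeddings_approx:
  fixes n :: nat and \<xi> :: "nat \<Rightarrow> real"
  assumes u: "u \<in> V" and c: "c \<in> deletion_colorings r V E u"
    and n: "n > 0" "1 / real n \<le> \<delta>" "\<delta> \<le> 1" "\<forall>i<r. ns i \<le> n"
    and ns: "\<forall>i<r. \<bar>real (ns i) - real n / real r\<bar> \<le> \<delta> * real n"
    and \<xi>: "\<forall>i<r. \<bar>\<xi> i - real (ds i) / real n\<bar> \<le> \<delta>"
  shows "\<bar>real (card (apex_embeddings r ns ds V E u c))
            - real n ^ (card V - 1) * (\<Prod>v\<in>V - {u}. slot_weight r \<xi> E u c v)\<bar>
         \<le> real n ^ (card V - 1) * (real (card V - 1) * 2 ^ (card V - 1) * (real (card V) * \<delta>))"
proof -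
  have fin: "finite V" using graph by (simp add: graph_def)
  have "card V \<ge> 1" using fin u by (auto simp: Suc_le_eq card_gt_0_iff)
  then have "card (V - {u}) = card V - 1" "real (card V - 1) + 1 = real (card V)"
    using fin u by (simp_all add: of_nat_diff)
  moreover have "\<bar>real (card {g \<in> PiE (V - {u}) (slots ns ds E u c). inj_on g (V - {u})})
            - real n ^ card (V - {u}) * (\<Prod>v\<in>V - {u}. slot_weight r \<xi> E u c v)\<bar>
         \<le> real n ^ card (V - {u}) * (real (card (V - {u})) * 2 ^ card (V - {u}) *
              ((real (card (V - {u})) + 1) * \<delta>))"
  proof (rule card_inj_PiE_approx[OF _ _ n(1-3)])
    fix v assume v: "v \<in> V - {u}"
    have "c v < r" using deletion_coloringsD[OF c v] .
    then show "card (slots ns ds E u c v) \<le> n"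
      using slot_count_le[OF c v] n(4) unfolding card_slots by fastforce
    show "\<bar>slot_weight r \<xi> E u c v - real (card (slots ns ds E u c v)) / real n\<bar> \<le> \<delta>"
      unfolding card_slots using \<open>c v < r\<close> ns \<xi> by (intro slot_weight_close[OF n(1)]) auto
  qed (use fin in \<open>auto simp: slots_def\<close>)
  ultimately show ?thesis
    using card_apex_embeddings[OF u c] by simp
qed

lemma card_host_embeddings_eq_sum:
  "card (embeddings V E (host_V r ns) (host_E r ns ds))
     = (\<Sum>(u, c)\<in>Sigma V (deletion_colorings r V E). card (apex_embeddings r ns ds V E u c))"
proof -
  let ?\<Sigma> = "Sigma V (deletion_colorings r V E)"
  let ?A = "\<lambda>p. apex_embeddings r ns ds V E (fst p) (snd p)"
  have fin: "finite V" using graph by (simp add: graph_def)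
  have "finite (V \<rightarrow>\<^sub>E host_V r ns)"
    using graph_host[OF ds_le_ns] fin by (simp add: graph_def finite_PiE)
  then have "finite (embeddings V E (host_V r ns) (host_E r ns ds))"
    by (rule rev_finite_subset) (auto simp: embeddings_def)
  then have "\<forall>p\<in>?\<Sigma>. finite (?A p)"
    using finite_subset[OF apex_embeddings_subset] by auto
  moreover have "\<forall>p\<in>?\<Sigma>. \<forall>q\<in>?\<Sigma>. p \<noteq> q \<longrightarrow> ?A p \<inter> ?A q = {}"
  proof (intro ballI impI)
    fix p q assume "p \<in> ?\<Sigma>" "q \<in> ?\<Sigma>" "p \<noteq> q"
    then show "?A p \<inter> ?A q = {}"
      by (cases p, cases q) (simp add: apex_embeddings_disjoint)
  qed
  moreover have "finite ?\<Sigma>" using fin by (intro finite_SigmaI finite_deletion_colorings)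
  ultimately have "card (\<Union>p\<in>?\<Sigma>. ?A p) = (\<Sum>p\<in>?\<Sigma>. card (?A p))"
    by (intro card_UN_disjoint) auto
  then show ?thesis
    unfolding host_embeddings_eq_UN_apex_embeddings by (simp add: split_beta)
qed

lemma P_F_eq_sum_slot_weights:
  "P_F V E r \<xi> = (\<Sum>(u, c)\<in>Sigma V (deletion_colorings r V E).
                    \<Prod>v\<in>V - {u}. slot_weight r \<xi> E u c v) / real (num_aut V E)"
proof -
  have fin: "finite V" using graph by (simp add: graph_def)
  let ?W = "\<lambda>u c. \<Prod>v\<in>V - {u}. slot_weight r \<xi> E u c v"
  have "(\<Sum>u\<in>{u\<in>V. critical_vertex r V E u}. \<Sum>c\<in>deletion_colorings r V E u.
          \<Prod>i<r. (1 / real r ^ card {v \<in> V - {u}. {u, v} \<notin> E \<and> c v = i}) *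
                 \<xi> i ^ card {v \<in> V - {u}. {u, v} \<in> E \<and> c v = i})
      = (\<Sum>u\<in>{u\<in>V. critical_vertex r V E u}. \<Sum>c\<in>deletion_colorings r V E u. ?W u c)"
    using fin by (intro sum.cong refl prod_color_classes_eq_prod_slot_weight)
  also have "\<dots> = (\<Sum>u\<in>V. \<Sum>c\<in>deletion_colorings r V E u. ?W u c)"
  proof (rule sum.mono_neutral_left[OF fin])
    show "\<forall>u\<in>V - {u \<in> V. critical_vertex r V E u}. (\<Sum>c\<in>deletion_colorings r V E u. ?W u c) = 0"
      using critical_vertex_if_deletion_colorings[OF graph chromatic] by fastforce
  qed auto
  also have "\<dots> = (\<Sum>(u, c)\<in>Sigma V (deletion_colorings r V E). ?W u c)"
    using fin finite_deletion_colorings by (intro sum.Sigma) auto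
  finally show ?thesis
    unfolding P_F_def deletion_colorings_def[symmetric] by simp
qed

lemma F_count_approx:
  fixes n :: nat and \<xi> :: "nat \<Rightarrow> real"
  assumes n: "n = (\<Sum>i<r. ns i)" "n > 0" "1 / real n \<le> \<delta>" "\<delta> \<le> 1"
    and ns: "\<forall>i<r. \<bar>real (ns i) - real n / real r\<bar> \<le> \<delta> * real n"
    and \<xi>: "\<forall>i<r. \<bar>\<xi> i - real (ds i) / real n\<bar> \<le> \<delta>"
  shows "\<bar>real (F_count V E r ns ds) - real n ^ (card V - 1) * P_F V E r \<xi>\<bar>
         \<le> real n ^ (card V - 1) * (real (card (Sigma V (deletion_colorings r V E))) *
              (real (card V - 1) * 2 ^ (card V - 1) * (real (card V) * \<delta>)))"
proof -
  let ?\<Sigma> = "Sigma V (deletion_colorings r V E)"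
  let ?N = "real n ^ (card V - 1)"
  let ?e = "real (card V - 1) * 2 ^ (card V - 1) * (real (card V) * \<delta>)"
  let ?W = "\<lambda>u c. \<Prod>v\<in>V - {u}. slot_weight r \<xi> E u c v"
  define A where "A = real (num_aut V E)"
  have "num_aut V E \<ge> 1" using num_aut_pos[of V E] graph by (simp add: graph_def Suc_le_eq)
  then have A: "A \<ge> 1" unfolding A_def by simp
  have ns_le: "\<forall>i<r. ns i \<le> n" unfolding n(1) by (auto intro: member_le_sum)
  have "F_count V E r ns ds * num_aut V E = (\<Sum>(u, c)\<in>?\<Sigma>. card (apex_embeddings r ns ds V E u c))"
    using card_embeddings[OF graph graph_host[OF ds_le_ns]] card_host_embeddings_eq_sum
    unfolding F_count_def by simp
  then have count: "real (F_count V E r ns ds) * A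
      = (\<Sum>(u, c)\<in>?\<Sigma>. real (card (apex_embeddings r ns ds V E u c)))"
    unfolding A_def by (metis (no_types, lifting) of_nat_mult of_nat_sum split_beta sum.cong)
  have weight: "P_F V E r \<xi> * A = (\<Sum>(u, c)\<in>?\<Sigma>. ?W u c)"
    using A unfolding P_F_eq_sum_slot_weights A_def by simp
  have "real (F_count V E r ns ds) * A - ?N * (P_F V E r \<xi> * A)
      = (real (F_count V E r ns ds) - ?N * P_F V E r \<xi>) * A"
    by (simp add: algebra_simps)
  then have "\<bar>real (F_count V E r ns ds) - ?N * P_F V E r \<xi>\<bar> * A
      = \<bar>real (F_count V E r ns ds) * A - ?N * (P_F V E r \<xi> * A)\<bar>"
    using A by (simp add: abs_mult)
  also have "\<dots> = \<bar>\<Sum>(u, c)\<in>?\<Sigma>. real (card (apex_embeddings r ns ds V E u c)) - ?N * ?W u c\<bar>"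
    unfolding count weight by (simp add: sum_subtractf sum_distrib_left split_beta)
  also have "\<dots> \<le> (\<Sum>(u, c)\<in>?\<Sigma>. \<bar>real (card (apex_embeddings r ns ds V E u c)) - ?N * ?W u c\<bar>)"
    by (simp add: split_beta sum_abs)
  also have "\<dots> \<le> (\<Sum>(u, c)\<in>?\<Sigma>. ?N * ?e)"
    using card_apex_embeddings_approx[OF _ _ n(2-4) ns_le ns \<xi>]
    by (intro sum_mono) (auto simp: split_beta)
  also have "\<dots> = ?N * (real (card ?\<Sigma>) * ?e)" by simp
  finally show ?thesis
    by (rule order_trans[OF mult_left_mono[OF A abs_ge_zero, unfolded mult_1_right]])
qed

end

lemma small_factor_exists:
  fixes K \<epsilon> :: real
  assumes "K \<ge> 0" "\<epsilon> > 0"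
  obtains \<delta> where "\<delta> > 0" "\<delta> \<le> 1" "K * \<delta> < \<epsilon>"
proof
  let ?\<delta> = "min 1 (\<epsilon> / (K + 1))"
  show "?\<delta> > 0" "?\<delta> \<le> 1" using assms by simp_all
  have "K * ?\<delta> \<le> K * (\<epsilon> / (K + 1))" using assms(1) by (intro mult_left_mono) simp_all
  also have "\<dots> < \<epsilon>" using assms by (simp add: field_simps)
  finally show "K * ?\<delta> < \<epsilon>" .
qed

lemma one_div_le_of_one_div_less:
  assumes "\<delta> > 0" "1 / \<delta> < real n"
  shows "n > 0" "1 / real n \<le> \<delta>"
proof -
  have "1 < \<delta> * real n" using assms by (simp add: divide_less_eq mult.commute)
  then show "n > 0" "1 / real n \<le> \<delta>"
    using assms(1) by (auto intro: Nat.gr0I simp: divide_le_eq mult.commute)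
qed

theorem lemma5:
  fixes r :: nat and V :: "'a set" and E :: "'a set set" and f :: nat
  assumes "r \<ge> 2" and "graph V E" and "r_critical r V E" and "f = card V"
  shows "\<forall>\<epsilon>>0. \<exists>\<delta>>0. \<forall>(ns :: nat \<Rightarrow> nat) (ds :: nat \<Rightarrow> nat) (\<xi> :: nat \<Rightarrow> real) (n :: nat).
     n = (\<Sum>i<r. ns i) \<and> real n > 1 / \<delta> \<and>
     (\<forall>i<r. ds i \<le> ns i \<and> \<bar>real (ns i) - real n / real r\<bar> \<le> \<delta> * real n \<and>
            \<bar>\<xi> i - real (ds i) / real n\<bar> \<le> \<delta>)
     \<longrightarrow> \<bar>real (F_count V E r ns ds) - real n ^ (f - 1) * P_F V E r \<xi>\<bar> < \<epsilon> * real n ^ (f - 1)"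
proof (intro allI impI)
  \<comment> \<open>Only \<open>\<chi>(F) = r + 1\<close> is used.\<close>
  fix \<epsilon> :: real assume "\<epsilon> > 0"
  have chromatic: "chromatic_number V E = r + 1" using assms(3) by (simp add: r_critical_def)
  define K where
    "K = real (card (Sigma V (deletion_colorings r V E))) * (real (f - 1) * 2 ^ (f - 1) * real f)"
  obtain \<delta> where \<delta>: "\<delta> > 0" "\<delta> \<le> 1" "K * \<delta> < \<epsilon>"
    using small_factor_exists[of K \<epsilon>] \<open>\<epsilon> > 0\<close> unfolding K_def by auto
  have "\<bar>real (F_count V E r ns ds) - real n ^ (f - 1) * P_F V E r \<xi>\<bar> < \<epsilon> * real n ^ (f - 1)"
    if n: "n = (\<Sum>i<r. ns i)" "real n > 1 / \<delta>"
      and parts: "\<forall>i<r. ds i \<le> ns i \<and> \<bar>real (ns i) - real n / real r\<bar> \<le> \<delta> * real n \<and>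
                        \<bar>\<xi> i - real (ds i) / real n\<bar> \<le> \<delta>"
    for ns ds \<xi> n
  proof -
    note n_pos = one_div_le_of_one_div_less[OF \<delta>(1) n(2)]
    have "\<bar>real (F_count V E r ns ds) - real n ^ (f - 1) * P_F V E r \<xi>\<bar> \<le> real n ^ (f - 1) * (K * \<delta>)"
      using F_count_approx[OF assms(2) chromatic _ n(1) n_pos \<delta>(2)] parts
      unfolding K_def assms(4) by (simp add: algebra_simps)
    also have "\<dots> < \<epsilon> * real n ^ (f - 1)" using \<delta>(3) n_pos(1) by simp
    finally show ?thesis .
  qed
  then show "\<exists>\<delta>>0. \<forall>ns ds \<xi> n. n = (\<Sum>i<r. ns i) \<and> real n > 1 / \<delta> \<and>
      (\<forall>i<r. ds i \<le> ns i \<and> \<bar>real (ns i) - real n / real r\<bar> \<le> \<delta> * real n \<and>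
             \<bar>\<xi> i - real (ds i) / real n\<bar> \<le> \<delta>)
      \<longrightarrow> \<bar>real (F_count V E r ns ds) - real n ^ (f - 1) * P_F V E r \<xi>\<bar> < \<epsilon> * real n ^ (f - 1)"
    using \<delta>(1) by blast
qed

end
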